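(* Let $f\in\mathcal G$. Then for almost every $x>0$, $$Pf(x)=T_{f'}\rho_1(x)=\int_0^\infty\rho_1(xt^{-1})f'(t)\,dt=\int_0^\infty\rho(t/x)f'(t)\,dt,$$ and for every $1<p<\infty$, $$\|Pf\|_p\le\nu_{1/p}(f')\,\|\rho_1\|_p<\infty.$$ Consequently $Pf\in L_p(0,\infty)$ for all $1<p\le\infty$.
   Context: A good kernel is a continuously differentiable function $f:[0,\infty)\to\mathbb C$ with $f(x)\to0$ as $x\to\infty$, $f\in L_1(0,\infty)$, and $\int_0^\infty t|f'(t)|\,dt<\infty$; $\mathcal G$ denotes the class of good kernels. For $f\in\mathcal G$, $Pf(x):=\sum_{n=1}^\infty f(nx)-\frac1x\int_0^\infty f(t)\,dt$ (defined a.e.). $\rho(x)=x-\lfloor x\rfloor$ is the fractional part and $\rho_1(x):=\rho(1/x)$; $\rho_1\in L_p(0,\infty)$ for $1<p\le\infty$. For measurable $F,G$ on $(0,\infty)$, $T_FG(x):=\int_0^\infty G(xt^{-1})F(t)\,dt$, and $\nu_\sigma(F):=\int_0^\infty t^\sigma|F(t)|\,dt$. *)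

theory Defs
  imports "HOL-Analysis.Analysis"
begin

definition good_kernel :: "(real \<Rightarrow> complex) \<Rightarrow> (real \<Rightarrow> complex) \<Rightarrow> bool" where
  "good_kernel f f' \<longleftrightarrow>
     (\<forall>t\<ge>0. (f has_vector_derivative f' t) (at t within {0..})) \<and>
     continuous_on {0..} f' \<and>
     (f \<longlongrightarrow> 0) at_top \<and>
     set_integrable lebesgue {0<..} f \<and>
     set_integrable lebesgue {0<..} (\<lambda>t. t * norm (f' t))"

text \<open>rho is the fractional part (library frac); rho_1(x) = rho(1/x).\<close>
definition rho1 :: "real \<Rightarrow> real" where
  "rho1 x = frac (1 / x)"

definition Pf :: "(real \<Rightarrow> complex) \<Rightarrow> real \<Rightarrow> complex" where
  "Pf f x = (\<Sum>n. f (real (Suc n) * x)) - complex_of_real (1 / x) * (LINT t:{0<..}|lebesgue. f t)"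

definition T_op :: "(real \<Rightarrow> complex) \<Rightarrow> (real \<Rightarrow> real) \<Rightarrow> real \<Rightarrow> complex" where
  "T_op F G x = (LINT t:{0<..}|lebesgue. complex_of_real (G (x / t)) * F t)"

definition nu :: "real \<Rightarrow> (real \<Rightarrow> complex) \<Rightarrow> real" where
  "nu \<sigma> F = (LINT t:{0<..}|lebesgue. t powr \<sigma> * norm (F t))"

definition Lp_norm :: "real \<Rightarrow> (real \<Rightarrow> 'a::real_normed_vector) \<Rightarrow> real" where
  "Lp_norm p g = (LINT x:{0<..}|lebesgue. norm (g x) powr p) powr (1 / p)"

end

theory Submission
  imports Defs
begin

text \<open>On the period \<open>[k x, (k + 1) x]\<close> the fractional part \<open>frac (t / x)\<close> equals
  \<open>t / x - k\<close>, so integrating \<open>(t / x - k) f'(t)\<close> by parts gives \<open>f((k + 1) x)\<close> minus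
  \<open>1 / x\<close> times the integral of \<open>f\<close> over the period. Summing over \<open>k\<close> and letting the number
  of periods tend to infinity turns the series into \<open>Pf(x) = \<integral> frac (t / x) f'(t) dt\<close>,
  hence \<open>|Pf(x)| \<le> \<integral> frac (t / x) |f'(t)| dt\<close>.

  For the \<open>L\<^sup>p\<close> bound apply Holder's inequality with respect to the weight
  \<open>t\<^bsup>1/p\<^esup> |f'(t)|\<close>, whose total mass is \<open>\<nu> = \<nu>\<^sub>1\<^sub>/\<^sub>p(f')\<close>:
  \<open>|Pf(x)|\<^sup>p \<le> \<nu>\<^bsup>p-1\<^esup> \<integral> frac (t / x)\<^sup>p t\<^bsup>1/p-1\<^esup> |f'(t)| dt\<close>. Integrating in \<open>x\<close>, exchanging
  the integrals and substituting \<open>x = t u\<close>, which gives \<open>\<integral> frac (t / x)\<^sup>p dx = t \<parallel>\<rho>\<^sub>1\<parallel>\<^sub>p\<^sup>p\<close>,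
  yields \<open>\<parallel>Pf\<parallel>\<^sub>p\<^sup>p \<le> \<nu>\<^sup>p \<parallel>\<rho>\<^sub>1\<parallel>\<^sub>p\<^sup>p\<close>.\<close>

section \<open>Integrability of good kernels\<close>

lemma good_kernelD:
  assumes "good_kernel f f'"
  shows good_kernel_has_derivative:
      "\<And>t. t \<ge> 0 \<Longrightarrow> (f has_vector_derivative f' t) (at t within {0..})"
    and good_kernel_continuous: "continuous_on {0..} f"
    and good_kernel_deriv_continuous: "continuous_on {0..} f'"
    and good_kernel_integrable: "f absolutely_integrable_on {0<..}"
    and good_kernel_moment_integrable: "(\<lambda>t. t * norm (f' t)) absolutely_integrable_on {0<..}"
  using assms continuous_on_vector_derivative[of "{0..}" f f']
  by (auto simp: good_kernel_def)

lemma powr_scaleR_absolutely_integrable_Ioi: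
  fixes g :: "real \<Rightarrow> 'a::euclidean_space"
  assumes cont: "continuous_on {0..} g"
    and moment: "(\<lambda>t. t * norm (g t)) absolutely_integrable_on {0<..}"
    and a: "0 \<le> a" "a \<le> 1"
  shows "(\<lambda>t. t powr a *\<^sub>R g t) absolutely_integrable_on {0<..}"
proof -
  have "continuous_on {0<..} (\<lambda>t. t powr a *\<^sub>R g t)"
    by (intro continuous_intros continuous_on_subset[OF cont]) auto
  then have meas: "(\<lambda>t. t powr a *\<^sub>R g t) \<in> borel_measurable (lebesgue_on S)"
    if "S \<subseteq> {0<..}" "S \<in> sets lebesgue" for S
    using that by (blast intro: continuous_imp_measurable_on_sets_lebesgue continuous_on_subset)
  have "g absolutely_integrable_on {0..1}"
    by (intro absolutely_integrable_continuous_real continuous_on_subset[OF cont]) auto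
  then have "g absolutely_integrable_on {0<..1}"
    by (rule set_integrable_subset) auto
  then have "(\<lambda>t. norm (g t)) integrable_on {0<..1}"
    by (simp add: absolutely_integrable_on_def)
  moreover have "norm (t powr a *\<^sub>R g t) \<le> norm (g t)" if "t \<in> {0<..1}" for t
  proof -
    have "t powr a \<le> 1 powr a"
      using that a by (intro powr_mono2) auto
    then show ?thesis
      by (auto intro!: mult_left_le_one_le)
  qed
  ultimately have near_zero: "(\<lambda>t. t powr a *\<^sub>R g t) absolutely_integrable_on {0<..1}"
    by (intro measurable_bounded_by_integrable_imp_absolutely_integrable[OF meas]) auto
  have "(\<lambda>t. t * norm (g t)) absolutely_integrable_on {1<..}"
    by (rule set_integrable_subset[OF moment]) auto
  then have "(\<lambda>t. t * norm (g t)) integrable_on {1<..}"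
    by (simp add: absolutely_integrable_on_def)
  moreover have "norm (t powr a *\<^sub>R g t) \<le> t * norm (g t)" if "t \<in> {1<..}" for t
  proof -
    have "t powr a \<le> t powr 1"
      using that a by (intro powr_mono) auto
    then show ?thesis
      using that by (auto intro!: mult_right_mono)
  qed
  ultimately have near_infinity: "(\<lambda>t. t powr a *\<^sub>R g t) absolutely_integrable_on {1<..}"
    by (intro measurable_bounded_by_integrable_imp_absolutely_integrable[OF meas]) auto
  have "(\<lambda>t. t powr a *\<^sub>R g t) absolutely_integrable_on ({0<..1} \<union> {1<..})"
    by (intro set_integrable_Un near_zero near_infinity) auto
  also have "{0<..1} \<union> {1<..} = {0::real<..}"
    by auto
  finally show ?thesis .
qed

lemma good_kernel_powr_deriv_integrable:
  assumes "good_kernel f f'" "0 \<le> a" "a \<le> 1"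
  shows "(\<lambda>t. t powr a *\<^sub>R f' t) absolutely_integrable_on {0<..}"
  using assms by (intro powr_scaleR_absolutely_integrable_Ioi good_kernelD)

lemma good_kernel_deriv_integrable:
  assumes "good_kernel f f'"
  shows "f' absolutely_integrable_on {0<..}"
proof -
  have "(\<lambda>t. t powr 0 *\<^sub>R f' t) absolutely_integrable_on {0<..} \<longleftrightarrow>
          f' absolutely_integrable_on {0<..}"
    by (rule set_integrable_cong) auto
  with good_kernel_powr_deriv_integrable[OF assms, of 0] show ?thesis
    by simp
qed

lemma good_kernel_powr_norm_deriv_integrable:
  assumes "good_kernel f f'" "0 \<le> a" "a \<le> 1"
  shows "set_integrable lebesgue {0<..} (\<lambda>t. t powr a * norm (f' t))"
  using set_integrable_norm[OF good_kernel_powr_deriv_integrable[OF assms]] by simp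

section \<open>The series as an integral against the fractional part\<close>

lemma borel_measurable_frac [measurable]: "(frac :: real \<Rightarrow> real) \<in> borel_measurable borel"
  unfolding frac_def[abs_def] by measurable

lemma borel_measurable_rho1 [measurable]: "rho1 \<in> borel_measurable borel"
  unfolding rho1_def[abs_def] by measurable

lemma rho1_div: "rho1 (x / t) = frac (t / x)"
  by (simp add: rho1_def)

lemma has_integral_frac_deriv_period:
  fixes f f' :: "real \<Rightarrow> 'a::banach"
  assumes deriv: "\<And>t. t \<ge> 0 \<Longrightarrow> (f has_vector_derivative f' t) (at t within {0..})"
    and x: "x > 0"
  shows "((\<lambda>t. frac (t / x) *\<^sub>R f' t) has_integral
           f (real (Suc k) * x) - (1 / x) *\<^sub>R integral {real k * x..real (Suc k) * x} f)
         {real k * x..real (Suc k) * x}"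
proof -
  define a b where "a = real k * x" and "b = real (Suc k) * x"
  have ab: "0 \<le> a" "a \<le> b"
    using x by (auto simp: a_def b_def)
  have "continuous_on {0..} f"
    by (rule continuous_on_vector_derivative) (use deriv in auto)
  then have "continuous_on {a..b} f"
    by (rule continuous_on_subset) (use ab in auto)
  then have f_int: "((\<lambda>t. (1 / x) *\<^sub>R f t) has_integral (1 / x) *\<^sub>R integral {a..b} f) {a..b}"
    by (intro has_integral_cmul integrable_integral integrable_continuous_interval)
  define g where "g t = (t / x - real k) *\<^sub>R f t" for t
  have "(g has_vector_derivative (t / x - real k) *\<^sub>R f' t + (1 / x) *\<^sub>R f t) (at t within {a..b})"
    if "t \<in> {a..b}" for t
  proof -
    have "(f has_vector_derivative f' t) (at t within {a..b})"
      by (rule has_vector_derivative_within_subset[OF deriv]) (use that ab in auto)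
    then show ?thesis
      unfolding g_def using x
      by (auto intro!: derivative_eq_intros simp: algebra_simps)
  qed
  then have "((\<lambda>t. (t / x - real k) *\<^sub>R f' t + (1 / x) *\<^sub>R f t) has_integral g b - g a) {a..b}"
    by (rule fundamental_theorem_of_calculus[OF ab(2)])
  moreover have "g a = 0" "g b = f b"
    using x by (simp_all add: g_def a_def b_def)
  ultimately have sawtooth: "((\<lambda>t. (t / x - real k) *\<^sub>R f' t) has_integral
                     f b - (1 / x) *\<^sub>R integral {a..b} f) {a..b}"
    using has_integral_diff[OF _ f_int] by fastforce
  have spike: "frac (t / x) *\<^sub>R f' t = (t / x - real k) *\<^sub>R f' t" if "t \<in> {a..b} - {b}" for t
  proof -
    have "real k \<le> t / x" "t / x < real k + 1"
      using that x by (auto simp: a_def b_def field_simps)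
    then have "floor (t / x) = int k"
      by (intro floor_unique) auto
    then show ?thesis
      by (simp add: frac_def)
  qed
  have "((\<lambda>t. frac (t / x) *\<^sub>R f' t) has_integral
               f b - (1 / x) *\<^sub>R integral {a..b} f) {a..b}"
    by (rule has_integral_spike_finite[where S = "{b}", OF _ spike sawtooth]) simp
  then show ?thesis
    by (simp only: a_def b_def)
qed

lemma has_integral_frac_deriv_partial_sum:
  fixes f f' :: "real \<Rightarrow> 'a::banach"
  assumes deriv: "\<And>t. t \<ge> 0 \<Longrightarrow> (f has_vector_derivative f' t) (at t within {0..})"
    and x: "x > 0"
  shows "((\<lambda>t. frac (t / x) *\<^sub>R f' t) has_integral
           (\<Sum>k<N. f (real (Suc k) * x)) - (1 / x) *\<^sub>R integral {0..real N * x} f)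
         {0..real N * x}"
proof (induction N)
  case 0
  then show ?case
    by (auto intro: has_integral_null_real)
next
  case (Suc N)
  have le: "0 \<le> real N * x" "real N * x \<le> real (Suc N) * x"
    using x by auto
  have "continuous_on {0..} f"
    by (rule continuous_on_vector_derivative) (use deriv in auto)
  then have "f integrable_on {0..real (Suc N) * x}"
    by (intro integrable_continuous_interval) (rule continuous_on_subset, auto)
  then have "integral {0..real N * x} f + integral {real N * x..real (Suc N) * x} f
               = integral {0..real (Suc N) * x} f"
    by (rule Henstock_Kurzweil_Integration.integral_combine[OF le])
  moreover have "((\<lambda>t. frac (t / x) *\<^sub>R f' t) has_integral
      ((\<Sum>k<N. f (real (Suc k) * x)) - (1 / x) *\<^sub>R integral {0..real N * x} f) +
      (f (real (Suc N) * x) - (1 / x) *\<^sub>R integral {real N * x..real (Suc N) * x} f))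
      {0..real (Suc N) * x}"
    by (rule has_integral_combine[OF le Suc.IH has_integral_frac_deriv_period[OF deriv x]])
  ultimately show ?case
    by (simp add: algebra_simps flip: scaleR_add_right)
qed

lemma integral_Icc_tendsto_Ioi:
  fixes u :: "real \<Rightarrow> 'a::euclidean_space"
  assumes u: "u absolutely_integrable_on {0<..}" and b: "filterlim b at_top sequentially"
  shows "(\<lambda>N. integral {0..b N} u) \<longlonglongrightarrow> integral {0<..} u"
proof -
  define v where "v N t = (if t \<in> {0<..b N} then u t else 0)" for N t
  have integral_v: "integral {0<..} (v N) = integral {0..b N} u" for N
  proof -
    have "integral {0<..} (v N) = integral {0<..b N} u"
      unfolding v_def integral_restrict_Int by (simp add: Int_absorb2 subset_iff)
    also have "\<dots> = integral {0..b N} u"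
      by (rule integral_subset_negligible) (auto intro: negligible_subset[OF negligible_sing[of 0]])
    finally show ?thesis .
  qed
  have "v N integrable_on {0<..}" for N
  proof -
    have "u absolutely_integrable_on {0<..b N}"
      by (rule set_integrable_subset[OF u]) auto
    then have "u integrable_on {0<..b N} \<inter> {0<..}"
      by (simp add: Int_absorb2 subset_iff set_lebesgue_integral_eq_integral(1))
    then show ?thesis
      unfolding v_def integrable_restrict_Int .
  qed
  moreover have "(\<lambda>t. norm (u t)) integrable_on {0<..}"
    using u by (simp add: absolutely_integrable_on_def)
  moreover have "(\<lambda>N. v N t) \<longlonglongrightarrow> u t" if "t \<in> {0<..}" for t
  proof (rule tendsto_eventually)
    have "\<forall>\<^sub>F N in sequentially. t \<le> b N"
      using b by (simp add: filterlim_at_top)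
    then show "\<forall>\<^sub>F N in sequentially. v N t = u t"
      by eventually_elim (use that in \<open>auto simp: v_def\<close>)
  qed
  ultimately have "(\<lambda>N. integral {0<..} (v N)) \<longlonglongrightarrow> integral {0<..} u"
    by (intro dominated_convergence(2)) (auto simp: v_def)
  then show ?thesis
    unfolding integral_v .
qed

lemma good_kernel_frac_deriv_integrable:
  assumes "good_kernel f f'"
  shows "(\<lambda>t. frac (t / x) *\<^sub>R f' t) absolutely_integrable_on {0<..}"
proof (rule measurable_bounded_by_integrable_imp_absolutely_integrable)
  have "continuous_on {0<..} f'"
    using good_kernel_deriv_continuous[OF assms] by (rule continuous_on_subset) auto
  moreover have "(\<lambda>t. frac (t / x)) \<in> borel_measurable borel"
    by measurable
  ultimately show "(\<lambda>t. frac (t / x) *\<^sub>R f' t) \<in> borel_measurable (lebesgue_on {0<..})"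
    by (intro borel_measurable_scaleR continuous_imp_measurable_on_sets_lebesgue
              measurable_restrict_space1 measurable_completion) auto
  show "(\<lambda>t. norm (f' t)) integrable_on {0<..}"
    using good_kernel_deriv_integrable[OF assms] by (simp add: absolutely_integrable_on_def)
  show "norm (frac (t / x) *\<^sub>R f' t) \<le> norm (f' t)" for t
    by (simp add: frac_lt_1 less_imp_le mult_left_le_one_le)
qed auto

lemma good_kernel_sums:
  assumes gk: "good_kernel f f'" and x: "x > 0"
  shows "(\<lambda>n. f (real (Suc n) * x)) sums
           ((LINT t:{0<..}|lebesgue. frac (t / x) *\<^sub>R f' t) + (1 / x) *\<^sub>R (LINT t:{0<..}|lebesgue. f t))"
proof -
  have b: "filterlim (\<lambda>N. real N * x) at_top sequentially"
    by (intro filterlim_at_top_mult_tendsto_pos[OF tendsto_const x] filterlim_real_sequentially)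
  have "(\<Sum>k<N. f (real (Suc k) * x)) = integral {0..real N * x} (\<lambda>t. frac (t / x) *\<^sub>R f' t)
          + (1 / x) *\<^sub>R integral {0..real N * x} f" for N
    using integral_unique[OF has_integral_frac_deriv_partial_sum[OF good_kernel_has_derivative[OF gk] x]]
    by simp
  moreover have "(\<lambda>N. integral {0..real N * x} (\<lambda>t. frac (t / x) *\<^sub>R f' t))
                   \<longlonglongrightarrow> (LINT t:{0<..}|lebesgue. frac (t / x) *\<^sub>R f' t)"
    using integral_Icc_tendsto_Ioi[OF good_kernel_frac_deriv_integrable[OF gk] b]
    by (simp add: set_lebesgue_integral_eq_integral(2)[OF good_kernel_frac_deriv_integrable[OF gk]])
  moreover have "(\<lambda>N. integral {0..real N * x} f) \<longlonglongrightarrow> (LINT t:{0<..}|lebesgue. f t)"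
    using integral_Icc_tendsto_Ioi[OF good_kernel_integrable[OF gk] b]
    by (simp add: set_lebesgue_integral_eq_integral(2)[OF good_kernel_integrable[OF gk]])
  ultimately show ?thesis
    unfolding sums_def by (simp add: tendsto_intros)
qed

lemma Pf_eq_integral_frac:
  assumes "good_kernel f f'" "x > 0"
  shows "Pf f x = (LINT t:{0<..}|lebesgue. frac (t / x) *\<^sub>R f' t)"
  unfolding Pf_def sums_unique[OF good_kernel_sums[OF assms], symmetric]
  by (simp add: scaleR_conv_of_real)

lemma norm_Pf_le:
  assumes "good_kernel f f'" "x > 0"
  shows "norm (Pf f x) \<le> (LINT t:{0<..}|lebesgue. frac (t / x) * norm (f' t))"
  using set_integral_norm_bound[OF good_kernel_frac_deriv_integrable[OF assms(1)]]
  by (simp add: Pf_eq_integral_frac[OF assms])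

lemma norm_Pf_le_deriv_L1:
  assumes "good_kernel f f'" "x > 0"
  shows "norm (Pf f x) \<le> (LINT t:{0<..}|lebesgue. norm (f' t))"
proof -
  have "set_integrable lebesgue {0<..} (\<lambda>t. frac (t / x) * norm (f' t))"
    using set_integrable_norm[OF good_kernel_frac_deriv_integrable[OF assms(1)]] by simp
  moreover have "set_integrable lebesgue {0<..} (\<lambda>t. norm (f' t))"
    using set_integrable_norm[OF good_kernel_deriv_integrable[OF assms(1)]] .
  ultimately have "(LINT t:{0<..}|lebesgue. frac (t / x) * norm (f' t))
                     \<le> (LINT t:{0<..}|lebesgue. norm (f' t))"
    by (rule set_integral_mono) (simp add: frac_lt_1 less_imp_le mult_left_le_one_le)
  then show ?thesis
    using norm_Pf_le[OF assms] by linarith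
qed

lemma Pf_measurable:
  assumes gk: "good_kernel f f'"
  shows "Pf f \<in> borel_measurable (restrict_space lebesgue {0<..})"
proof (rule borel_measurable_LIMSEQ_metric)
  define c where "c = (LINT t:{0<..}|lebesgue. f t)"
  show "(\<lambda>x. (\<Sum>n<N. f (real (Suc n) * x)) - complex_of_real (1 / x) * c)
          \<in> borel_measurable (restrict_space lebesgue {0<..})" for N
  proof (rule continuous_imp_measurable_on_sets_lebesgue)
    have "continuous_on {0<..} (\<lambda>x. f (real (Suc n) * x))" for n
      by (rule continuous_on_compose2[OF good_kernel_continuous[OF gk]])
         (auto intro!: continuous_intros)
    then show "continuous_on {0<..} (\<lambda>x. (\<Sum>n<N. f (real (Suc n) * x)) - complex_of_real (1 / x) * c)"
      by (intro continuous_intros) auto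
  qed auto
  show "(\<lambda>N. (\<Sum>n<N. f (real (Suc n) * x)) - complex_of_real (1 / x) * c) \<longlonglongrightarrow> Pf f x"
    if "x \<in> space (restrict_space lebesgue {0<..})" for x
  proof -
    have x: "x > 0"
      using that by simp
    have "(\<lambda>N. \<Sum>n<N. f (real (Suc n) * x)) \<longlonglongrightarrow> Pf f x + complex_of_real (1 / x) * c"
      using good_kernel_sums[OF gk x]
      by (simp add: sums_def Pf_eq_integral_frac[OF gk x] c_def scaleR_conv_of_real)
    then have "(\<lambda>N. (\<Sum>n<N. f (real (Suc n) * x)) - complex_of_real (1 / x) * c)
                 \<longlonglongrightarrow> Pf f x + complex_of_real (1 / x) * c - complex_of_real (1 / x) * c"
      by (intro tendsto_diff tendsto_const)
    then show ?thesis
      by simp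
  qed
qed

section \<open>The \<open>L\<^sup>p\<close> bound\<close>

lemma powr_tangent_line_le:
  fixes p m y :: real
  assumes p: "p > 1" and "0 \<le> m" "0 \<le> y"
  shows "p * m powr (p - 1) * y \<le> y powr p + (p - 1) * m powr p"
proof -
  define q where "q = p / (p - 1)"
  have "q > 1" "1 / p + 1 / q = 1"
    using p by (auto simp: q_def field_simps)
  then have "y * m powr (p - 1) \<le> y powr p / p + (m powr (p - 1)) powr q / q"
    using p assms by (intro Youngs_inequality) auto
  also have "(m powr (p - 1)) powr q = m powr p"
    using p by (simp add: powr_powr q_def)
  finally have "p * (y * m powr (p - 1)) \<le> p * (y powr p / p + m powr p / q)"
    using p by simp
  also have "\<dots> = y powr p + (p - 1) * m powr p"
    using p by (simp add: q_def field_simps)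
  finally show ?thesis
    by (simp add: mult_ac)
qed

lemma powr_diff_one_mult_self:
  fixes x a :: real
  assumes "0 \<le> x"
  shows "x powr (a - 1) * x = x powr a"
  using powr_add[of x "a - 1" 1] assms by simp

lemma set_integral_nonneg:
  fixes g :: "'a \<Rightarrow> real"
  assumes "\<And>x. x \<in> S \<Longrightarrow> 0 \<le> g x"
  shows "0 \<le> (LINT x:S|M. g x)"
  unfolding set_lebesgue_integral_def using assms
  by (intro integral_nonneg_AE) (auto simp: indicator_def)

lemma nu_nonneg: "0 \<le> nu \<sigma> F"
  unfolding nu_def by (rule set_integral_nonneg) simp

lemma nn_integral_ennreal_cmult:
  fixes c :: real
  assumes "0 \<le> c" "h \<in> borel_measurable M"
  shows "(\<integral>\<^sup>+ t. ennreal (c * h t) \<partial>M) = ennreal c * (\<integral>\<^sup>+ t. ennreal (h t) \<partial>M)"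
  using assms by (simp add: ennreal_mult' nn_integral_cmult)

lemma nn_integral_lborel_eq_set_integral:
  fixes g :: "real \<Rightarrow> real"
  assumes "set_integrable lebesgue S g" "\<And>x. x \<in> S \<Longrightarrow> 0 \<le> g x"
  shows "(\<integral>\<^sup>+ x. ennreal (indicator S x * g x) \<partial>lborel) = ennreal (LINT x:S|lebesgue. g x)"
proof -
  have "(\<integral>\<^sup>+ x. ennreal (indicator S x * g x) \<partial>lborel)
          = (\<integral>\<^sup>+ x. ennreal (indicator S x * g x) \<partial>lebesgue)"
    by (simp add: nn_integral_completion)
  also have "\<dots> = ennreal (integral\<^sup>L lebesgue (\<lambda>x. indicator S x * g x))"
    using assms by (intro nn_integral_eq_integral) (auto simp: set_integrable_def indicator_def)
  also have "\<dots> = ennreal (LINT x:S|lebesgue. g x)"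
    by (simp add: set_lebesgue_integral_def)
  finally show ?thesis .
qed

lemma set_integrableI_nn_integral_lborel:
  fixes g :: "real \<Rightarrow> real"
  assumes "(\<lambda>x. indicator S x * g x) \<in> borel_measurable lebesgue" "\<And>x. x \<in> S \<Longrightarrow> 0 \<le> g x"
    and "(\<integral>\<^sup>+ x. ennreal (indicator S x * g x) \<partial>lborel) < \<infinity>"
  shows "set_integrable lebesgue S g"
  using assms unfolding set_integrable_def
  by (intro integrableI_nonneg) (auto simp: nn_integral_completion indicator_def)

lemma nn_integral_tangent_line_le:
  fixes g w :: "'a \<Rightarrow> real"
  assumes p: "p > 1" and m: "0 \<le> m"
    and [measurable]: "g \<in> borel_measurable M" "w \<in> borel_measurable M"
    and g_nonneg: "\<And>t. 0 \<le> g t" and w_nonneg: "\<And>t. 0 \<le> w t"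
  shows "ennreal (p * m powr (p - 1)) * (\<integral>\<^sup>+ t. ennreal (g t * w t) \<partial>M)
           \<le> (\<integral>\<^sup>+ t. ennreal (g t powr p * w t) \<partial>M)
               + ennreal ((p - 1) * m powr p) * (\<integral>\<^sup>+ t. ennreal (w t) \<partial>M)"
proof -
  have "ennreal (p * m powr (p - 1) * (g t * w t))
          \<le> ennreal (g t powr p * w t) + ennreal ((p - 1) * m powr p * w t)" for t
  proof -
    have "p * m powr (p - 1) * (g t * w t) \<le> g t powr p * w t + (p - 1) * m powr p * w t"
      using mult_right_mono[OF powr_tangent_line_le[OF p m g_nonneg] w_nonneg[of t]]
      by (simp add: algebra_simps)
    then have "ennreal (p * m powr (p - 1) * (g t * w t))
                 \<le> ennreal (g t powr p * w t + (p - 1) * m powr p * w t)"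
      by (rule ennreal_leI)
    also have "\<dots> = ennreal (g t powr p * w t) + ennreal ((p - 1) * m powr p * w t)"
      using p m w_nonneg[of t] by (intro ennreal_plus) auto
    finally show ?thesis .
  qed
  then have "(\<integral>\<^sup>+ t. ennreal (p * m powr (p - 1) * (g t * w t)) \<partial>M)
               \<le> (\<integral>\<^sup>+ t. ennreal (g t powr p * w t) + ennreal ((p - 1) * m powr p * w t) \<partial>M)"
    by (rule nn_integral_mono)
  then show ?thesis
    using p m by (simp add: nn_integral_add nn_integral_ennreal_cmult)
qed

lemma nn_integral_mult_eq_0_if_weight_eq_0:
  fixes g w :: "'a \<Rightarrow> real"
  assumes [measurable]: "g \<in> borel_measurable M" "w \<in> borel_measurable M"
    and w_nonneg: "\<And>t. 0 \<le> w t" and W: "(\<integral>\<^sup>+ t. ennreal (w t) \<partial>M) = 0"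
  shows "(\<integral>\<^sup>+ t. ennreal (g t * w t) \<partial>M) = 0"
proof -
  have "AE t in M. ennreal (w t) = 0"
    using W by (simp add: nn_integral_0_iff_AE)
  moreover have "w t = 0" if "ennreal (w t) = 0" for t
    using that w_nonneg[of t] by (simp add: ennreal_eq_0_iff)
  ultimately have "AE t in M. ennreal (g t * w t) = 0"
    by (metis (mono_tags, lifting) eventually_mono mult_zero_right)
  then show ?thesis
    by (simp add: nn_integral_0_iff_AE)
qed

text \<open>Holder's inequality in the form \<open>(\<integral> g w)\<^sup>p \<le> (\<integral> w)\<^bsup>p-1\<^esup> \<integral> g\<^sup>p w\<close>: integrate the
  tangent-line inequality of \<open>y\<^sup>p\<close> at \<open>m = G / W\<close> against \<open>w\<close>.\<close>

lemma nn_integral_weighted_powr_le: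
  fixes g w :: "'a \<Rightarrow> real"
  assumes p: "p > 1"
    and [measurable]: "g \<in> borel_measurable M" "w \<in> borel_measurable M"
    and g_nonneg: "\<And>t. 0 \<le> g t" and w_nonneg: "\<And>t. 0 \<le> w t"
    and W: "(\<integral>\<^sup>+ t. ennreal (w t) \<partial>M) = ennreal W" "0 \<le> W"
    and G: "(\<integral>\<^sup>+ t. ennreal (g t * w t) \<partial>M) = ennreal G" "0 \<le> G"
  shows "ennreal (G powr p) \<le> ennreal (W powr (p - 1)) * (\<integral>\<^sup>+ t. ennreal (g t powr p * w t) \<partial>M)"
proof (cases "G = 0")
  case True
  then show ?thesis
    by simp
next
  case False
  with G have "G > 0"
    by simp
  have "W > 0"
  proof (rule ccontr)
    assume "\<not> W > 0"
    with W have "(\<integral>\<^sup>+ t. ennreal (g t * w t) \<partial>M) = 0"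
      by (intro nn_integral_mult_eq_0_if_weight_eq_0 w_nonneg) auto
    with G \<open>G > 0\<close> show False
      by simp
  qed
  define m where "m = G / W"
  define A where "A = m powr p * W"
  define I where "I = (\<integral>\<^sup>+ t. ennreal (g t powr p * w t) \<partial>M)"
  have "m > 0" and G_eq: "G = m * W"
    using \<open>G > 0\<close> \<open>W > 0\<close> by (simp_all add: m_def)
  have A_nonneg: "0 \<le> A"
    using W(2) by (simp add: A_def)
  have "m powr (p - 1) * m = m powr p"
    using \<open>m > 0\<close> by (intro powr_diff_one_mult_self) simp
  then have "p * A = p * m powr (p - 1) * G"
    unfolding A_def G_eq by (metis mult.assoc)
  then have "ennreal (p * A) = ennreal (p * m powr (p - 1)) * ennreal G"
    using p G(2) by (simp add: ennreal_mult mult.assoc)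
  also have "\<dots> \<le> I + ennreal ((p - 1) * A)"
    using nn_integral_tangent_line_le[OF p less_imp_le[OF \<open>m > 0\<close>] assms(2,3) g_nonneg w_nonneg] p W
    by (simp add: G(1)[symmetric] I_def A_def ennreal_mult mult.assoc)
  finally have "ennreal (p * A) \<le> I + ennreal ((p - 1) * A)" .
  moreover have "ennreal (p * A) = ennreal ((p - 1) * A) + ennreal A"
  proof -
    have "0 \<le> (p - 1) * A"
      using p A_nonneg by simp
    then show ?thesis
      using ennreal_plus[of "(p - 1) * A" A] A_nonneg by (simp add: algebra_simps)
  qed
  ultimately have "ennreal A \<le> I"
    by (simp add: add.commute ennreal_add_left_cancel_le)
  moreover have "G powr p = W powr (p - 1) * A"
  proof -
    have "G powr p = m powr p * (W powr (p - 1) * W)"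
      using \<open>m > 0\<close> W(2) by (simp add: G_eq powr_mult powr_diff_one_mult_self)
    then show ?thesis
      by (simp add: A_def mult_ac)
  qed
  ultimately show ?thesis
    using W(2) \<open>m > 0\<close> by (simp add: I_def A_def ennreal_mult mult_left_mono)
qed

lemma nn_integral_rho1_powr_finite:
  fixes p :: real
  assumes p: "p > 1"
  shows "(\<integral>\<^sup>+ u. ennreal (indicator {0<..} u * rho1 u powr p) \<partial>lborel) < \<infinity>"
proof -
  have "ennreal (indicator {0<..} u * rho1 u powr p)
          \<le> indicator {0..1} u + ennreal (u powr - p) * indicator {1..} u" for u :: real
  proof (cases "u \<le> 1")
    case True
    have "rho1 u powr p \<le> 1 powr p"
      using p frac_lt_1[of "1 / u"] by (intro powr_mono2) (auto simp: rho1_def)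
    then have "ennreal (indicator {0<..} u * rho1 u powr p) \<le> indicator {0..1} u"
      using True by (auto simp: indicator_def)
    then show ?thesis
      by (rule order_trans) simp
  next
    case False
    then have "rho1 u = 1 / u"
      by (simp add: rho1_def frac_eq_id)
    then have "rho1 u powr p = u powr - p"
      using False by (simp add: powr_divide powr_minus_divide)
    then show ?thesis
      using False by simp
  qed
  then have "(\<integral>\<^sup>+ u. ennreal (indicator {0<..} u * rho1 u powr p) \<partial>lborel)
               \<le> (\<integral>\<^sup>+ u. indicator {0..1} u + ennreal (u powr - p) * indicator {1..} u \<partial>lborel)"
    by (rule nn_integral_mono)
  also have "\<dots> = 1 + ennreal (1 / (p - 1))"
  proof -
    have "((\<lambda>u. u powr - p) has_integral - (1 powr (- p + 1)) / (- p + 1)) {1..}"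
      using p by (intro has_integral_powr_to_inf) auto
    also have "- (1 powr (- p + 1)) / (- p + 1) = 1 / (p - 1)"
      using p by (simp add: field_simps)
    finally have "(\<integral>\<^sup>+ u. ennreal (u powr - p) * indicator {1..} u \<partial>lborel) = ennreal (1 / (p - 1))"
      by (rule nn_integral_has_integral_lebesgue'[rotated]) simp
    then show ?thesis
      by (subst nn_integral_add) auto
  qed
  also have "\<dots> < \<infinity>"
    by simp
  finally show ?thesis .
qed

lemma rho1_powr_integrable:
  assumes "p > 1"
  shows "set_integrable lebesgue {0<..} (\<lambda>x. \<bar>rho1 x\<bar> powr p)"
proof (rule set_integrableI_nn_integral_lborel)
  show "(\<lambda>x. indicator {0<..} x * \<bar>rho1 x\<bar> powr p) \<in> borel_measurable lebesgue"
    by (rule measurable_completion) measurable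
  show "(\<integral>\<^sup>+ x. ennreal (indicator {0<..} x * \<bar>rho1 x\<bar> powr p) \<partial>lborel) < \<infinity>"
    using nn_integral_rho1_powr_finite[OF assms] by (simp add: rho1_def)
qed auto

lemma nn_integral_frac_div_powr:
  fixes t p :: real
  assumes t: "t > 0"
  shows "(\<integral>\<^sup>+ x. ennreal (indicator {0<..} x * frac (t / x) powr p) \<partial>lborel)
           = ennreal t * (\<integral>\<^sup>+ u. ennreal (indicator {0<..} u * rho1 u powr p) \<partial>lborel)"
proof -
  have "(\<integral>\<^sup>+ x. ennreal (indicator {0<..} x * frac (t / x) powr p) \<partial>lborel)
          = ennreal t * (\<integral>\<^sup>+ u. ennreal (indicator {0<..} (t * u) * frac (t / (t * u)) powr p) \<partial>lborel)"
    using nn_integral_real_affine[of "\<lambda>x. ennreal (indicator {0<..} x * frac (t / x) powr p)" t 0] t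
    by simp
  also have "(\<lambda>u. ennreal (indicator {0<..} (t * u) * frac (t / (t * u)) powr p))
               = (\<lambda>u. ennreal (indicator {0<..} u * rho1 u powr p))"
    using t by (auto simp: indicator_def zero_less_mult_iff rho1_def)
  finally show ?thesis .
qed

lemma good_kernel_deriv_norm_borel_measurable:
  assumes "good_kernel f f'"
  shows "(\<lambda>t. indicator {0<..} t * norm (f' t)) \<in> borel_measurable borel"
proof -
  have "continuous_on {0<..} f'"
    using good_kernel_deriv_continuous[OF assms] by (rule continuous_on_subset) auto
  then have "(\<lambda>t. indicator {0<..} t *\<^sub>R f' t) \<in> borel_measurable borel"
    by (intro borel_measurable_continuous_on_indicator) auto
  then have "(\<lambda>t. norm (indicator {0<..} t *\<^sub>R f' t)) \<in> borel_measurable borel"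
    by measurable
  also have "(\<lambda>t. norm (indicator {0<..} t *\<^sub>R f' t)) = (\<lambda>t. indicator {0<..} t * norm (f' t))"
    by (auto simp: indicator_def)
  finally show ?thesis .
qed

lemma powr_inverse_exponents:
  fixes t p :: real
  assumes "t > 0" "p > 0"
  shows "t powr (- 1 / p) * t powr (1 / p) = 1"
    and "(t powr (- 1 / p)) powr p * t powr (1 / p) = t powr (1 / p - 1)"
proof -
  show "t powr (- 1 / p) * t powr (1 / p) = 1"
    using assms by (simp flip: powr_add)
  have "(t powr (- 1 / p)) powr p * t powr (1 / p) = t powr (- 1 / p * p + 1 / p)"
    by (simp only: powr_powr powr_add)
  also have "- 1 / p * p + 1 / p = 1 / p - 1"
    using assms by (simp add: field_simps)
  finally show "(t powr (- 1 / p)) powr p * t powr (1 / p) = t powr (1 / p - 1)" .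
qed

lemma norm_Pf_powr_le:
  assumes gk: "good_kernel f f'" and p: "p > 1" and x: "x > 0"
  shows "ennreal (norm (Pf f x) powr p) \<le> ennreal (nu (1 / p) f' powr (p - 1)) *
           (\<integral>\<^sup>+ t. ennreal (frac (t / x) powr p * (t powr (1 / p - 1) *
                                 (indicator {0<..} t * norm (f' t)))) \<partial>lborel)"
proof -
  have [measurable]: "(\<lambda>t. indicator {0<..} t * norm (f' t)) \<in> borel_measurable borel"
    by (rule good_kernel_deriv_norm_borel_measurable[OF gk])
  define g where "g t = frac (t / x) * t powr (- 1 / p)" for t
  define w where "w t = t powr (1 / p) * (indicator {0<..} t * norm (f' t))" for t
  define G where "G = (LINT t:{0<..}|lebesgue. frac (t / x) * norm (f' t))"
  have "(\<integral>\<^sup>+ t. ennreal (w t) \<partial>lborel) = ennreal (nu (1 / p) f')"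
    using nn_integral_lborel_eq_set_integral[OF good_kernel_powr_norm_deriv_integrable[OF gk, of "1 / p"]] p
    by (simp add: w_def nu_def mult_ac)
  moreover have "(\<integral>\<^sup>+ t. ennreal (g t * w t) \<partial>lborel) = ennreal G"
  proof -
    have "g t * w t = indicator {0<..} t * (frac (t / x) * norm (f' t))" for t
      using powr_inverse_exponents(1)[of t p] p by (cases "t > 0") (simp_all add: g_def w_def mult_ac)
    moreover have "set_integrable lebesgue {0<..} (\<lambda>t. frac (t / x) * norm (f' t))"
      using set_integrable_norm[OF good_kernel_frac_deriv_integrable[OF gk]] by simp
    ultimately show ?thesis
      by (simp add: nn_integral_lborel_eq_set_integral G_def)
  qed
  ultimately have Holder: "ennreal (G powr p) \<le> ennreal (nu (1 / p) f' powr (p - 1)) *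
                             (\<integral>\<^sup>+ t. ennreal (g t powr p * w t) \<partial>lborel)"
    using p by (intro nn_integral_weighted_powr_le)
               (auto simp: g_def w_def G_def nu_nonneg intro!: set_integral_nonneg)
  have "g t powr p * w t = frac (t / x) powr p * (t powr (1 / p - 1) *
          (indicator {0<..} t * norm (f' t)))" for t
    using powr_inverse_exponents(2)[of t p] p
    by (cases "t > 0") (simp_all add: g_def w_def powr_mult mult_ac)
  then have integrand: "(\<lambda>t. ennreal (g t powr p * w t)) = (\<lambda>t. ennreal (frac (t / x) powr p *
                          (t powr (1 / p - 1) * (indicator {0<..} t * norm (f' t)))))"
    by simp
  have "ennreal (norm (Pf f x) powr p) \<le> ennreal (G powr p)"
    using norm_Pf_le[OF gk x] p by (intro ennreal_leI powr_mono2) (simp_all add: G_def)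
  also note Holder
  finally show ?thesis
    unfolding integrand .
qed

lemma nn_integral_frac_powr_weighted_deriv:
  assumes gk: "good_kernel f f'" and p: "p > 1"
  shows "(\<integral>\<^sup>+ t. (\<integral>\<^sup>+ x. ennreal (indicator {0<..} x * frac (t / x) powr p *
             (t powr (1 / p - 1) * (indicator {0<..} t * norm (f' t)))) \<partial>lborel) \<partial>lborel)
           = ennreal ((LINT x:{0<..}|lebesgue. \<bar>rho1 x\<bar> powr p) * nu (1 / p) f')"
proof -
  define R where "R = (LINT x:{0<..}|lebesgue. \<bar>rho1 x\<bar> powr p)"
  define D where "D t = t powr (1 / p - 1) * (indicator {0<..} t * norm (f' t))" for t
  have R_nonneg: "0 \<le> R"
    unfolding R_def by (rule set_integral_nonneg) simp
  have [measurable]: "(\<lambda>t. indicator {0<..} t * norm (f' t)) \<in> borel_measurable borel"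
    by (rule good_kernel_deriv_norm_borel_measurable[OF gk])
  have D_measurable [measurable]: "D \<in> borel_measurable borel"
    unfolding D_def by measurable
  have D_nonneg: "0 \<le> D t" for t
    by (simp add: D_def)
  have R: "(\<integral>\<^sup>+ u. ennreal (indicator {0<..} u * rho1 u powr p) \<partial>lborel) = ennreal R"
    using nn_integral_lborel_eq_set_integral[OF rho1_powr_integrable[OF p]]
    by (simp add: R_def rho1_def)
  have inner: "(\<integral>\<^sup>+ x. ennreal (indicator {0<..} x * frac (t / x) powr p * D t) \<partial>lborel)
                 = ennreal R * ennreal (t * D t)" for t
  proof (cases "t > 0")
    case True
    have "(\<integral>\<^sup>+ x. ennreal (indicator {0<..} x * frac (t / x) powr p * D t) \<partial>lborel)
            = ennreal (D t) * (\<integral>\<^sup>+ x. ennreal (indicator {0<..} x * frac (t / x) powr p) \<partial>lborel)"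
      using D_nonneg[of t] by (simp add: nn_integral_ennreal_cmult mult.commute[of _ "D t"])
    also have "\<dots> = ennreal R * ennreal (t * D t)"
      unfolding nn_integral_frac_div_powr[OF True] R
      using True D_nonneg[of t] by (simp add: ennreal_mult mult_ac)
    finally show ?thesis .
  qed (simp add: D_def)
  have "t * D t = indicator {0<..} t * (t powr (1 / p) * norm (f' t))" for t
  proof (cases "t > 0")
    case True
    then have "t powr (1 / p - 1) * t = t powr (1 / p)"
      by (intro powr_diff_one_mult_self) simp
    then show ?thesis
      using True by (simp add: D_def mult_ac)
  qed (simp add: D_def)
  then have "(\<integral>\<^sup>+ t. ennreal (t * D t) \<partial>lborel) = ennreal (nu (1 / p) f')"
    using good_kernel_powr_norm_deriv_integrable[OF gk, of "1 / p"] p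
    by (simp add: nn_integral_lborel_eq_set_integral nu_def)
  then show ?thesis
    using R_nonneg nu_nonneg
    by (simp add: inner nn_integral_cmult ennreal_mult flip: D_def R_def)
qed

lemma nn_integral_Pf_powr_le:
  assumes gk: "good_kernel f f'" and p: "p > 1"
  shows "(\<integral>\<^sup>+ x. ennreal (indicator {0<..} x * norm (Pf f x) powr p) \<partial>lborel)
           \<le> ennreal (nu (1 / p) f' powr p * (LINT x:{0<..}|lebesgue. \<bar>rho1 x\<bar> powr p))"
proof -
  define \<nu> where "\<nu> = nu (1 / p) f'"
  define R where "R = (LINT x:{0<..}|lebesgue. \<bar>rho1 x\<bar> powr p)"
  have R_nonneg: "0 \<le> R"
    unfolding R_def by (rule set_integral_nonneg) simp
  define F where "F x t = indicator {0<..} x * frac (t / x) powr p *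
                            (t powr (1 / p - 1) * (indicator {0<..} t * norm (f' t)))" for x t
  have [measurable]: "(\<lambda>t. indicator {0<..} t * norm (f' t)) \<in> borel_measurable borel"
    by (rule good_kernel_deriv_norm_borel_measurable[OF gk])
  have "(\<lambda>(x, t). ennreal (F x t)) \<in> borel_measurable (borel \<Otimes>\<^sub>M borel)"
    unfolding F_def by measurable
  moreover have "sets (lborel \<Otimes>\<^sub>M lborel) = sets (borel \<Otimes>\<^sub>M (borel :: real measure))"
    by (rule sets_pair_measure_cong) simp_all
  ultimately have F_measurable: "(\<lambda>(x, t). ennreal (F x t)) \<in> borel_measurable (lborel \<Otimes>\<^sub>M lborel)"
    by (simp cong: measurable_cong_sets)
  have "(\<integral>\<^sup>+ x. ennreal (indicator {0<..} x * norm (Pf f x) powr p) \<partial>lborel)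
          \<le> (\<integral>\<^sup>+ x. ennreal (\<nu> powr (p - 1)) * (\<integral>\<^sup>+ t. ennreal (F x t) \<partial>lborel) \<partial>lborel)"
  proof (rule nn_integral_mono)
    fix x
    show "ennreal (indicator {0<..} x * norm (Pf f x) powr p)
            \<le> ennreal (\<nu> powr (p - 1)) * (\<integral>\<^sup>+ t. ennreal (F x t) \<partial>lborel)"
      using norm_Pf_powr_le[OF gk p, of x] by (cases "x > 0") (simp_all add: \<nu>_def F_def mult_ac)
  qed
  also have "\<dots> = ennreal (\<nu> powr (p - 1)) * (\<integral>\<^sup>+ t. (\<integral>\<^sup>+ x. ennreal (F x t) \<partial>lborel) \<partial>lborel)"
    using lborel.borel_measurable_nn_integral[OF F_measurable]
    by (simp add: nn_integral_cmult lborel_pair.Fubini'[OF F_measurable])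
  also have "\<dots> = ennreal (\<nu> powr (p - 1)) * ennreal (R * \<nu>)"
    unfolding F_def nn_integral_frac_powr_weighted_deriv[OF gk p] by (simp add: \<nu>_def R_def)
  also have "\<dots> = ennreal (\<nu> powr (p - 1) * \<nu> * R)"
    using nu_nonneg[of "1 / p" f'] R_nonneg by (simp add: \<nu>_def ennreal_mult[symmetric] mult_ac)
  also have "\<nu> powr (p - 1) * \<nu> = \<nu> powr p"
    using nu_nonneg unfolding \<nu>_def by (rule powr_diff_one_mult_self)
  finally show ?thesis
    by (simp add: \<nu>_def R_def)
qed

lemma Pf_Lp:
  assumes gk: "good_kernel f f'" and p: "p > 1"
  shows "set_integrable lebesgue {0<..} (\<lambda>x. norm (Pf f x) powr p)"
    and "Lp_norm p (Pf f) \<le> nu (1 / p) f' * Lp_norm p rho1"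
proof -
  define \<nu> where "\<nu> = nu (1 / p) f'"
  define R where "R = (LINT x:{0<..}|lebesgue. \<bar>rho1 x\<bar> powr p)"
  have \<nu>_nonneg: "0 \<le> \<nu>"
    unfolding \<nu>_def by (rule nu_nonneg)
  have R_nonneg: "0 \<le> R"
    unfolding R_def by (rule set_integral_nonneg) simp
  have [measurable]: "Pf f \<in> borel_measurable (restrict_space lebesgue {0<..})"
    by (rule Pf_measurable[OF gk])
  have "(\<lambda>x. norm (Pf f x) powr p) \<in> borel_measurable (restrict_space lebesgue {0<..})"
    by measurable
  then have "(\<lambda>x. indicator {0<..} x * norm (Pf f x) powr p) \<in> borel_measurable lebesgue"
    by (subst (asm) borel_measurable_restrict_space_iff) auto
  moreover have bound: "(\<integral>\<^sup>+ x. ennreal (indicator {0<..} x * norm (Pf f x) powr p) \<partial>lborel)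
                          \<le> ennreal (\<nu> powr p * R)"
    using nn_integral_Pf_powr_le[OF gk p] by (simp add: \<nu>_def R_def)
  ultimately show integrable: "set_integrable lebesgue {0<..} (\<lambda>x. norm (Pf f x) powr p)"
    by (intro set_integrableI_nn_integral_lborel) (auto simp: le_less_trans[OF _ ennreal_less_top])
  have "(LINT x:{0<..}|lebesgue. norm (Pf f x) powr p) \<le> \<nu> powr p * R"
    using bound \<nu>_nonneg R_nonneg by (simp add: nn_integral_lborel_eq_set_integral[OF integrable])
  then have "Lp_norm p (Pf f) \<le> (\<nu> powr p * R) powr (1 / p)"
    unfolding Lp_norm_def using p by (intro powr_mono2) (auto intro!: set_integral_nonneg)
  also have "\<dots> = \<nu> * Lp_norm p rho1"
    using p \<nu>_nonneg R_nonneg by (simp add: Lp_norm_def R_def powr_mult powr_powr)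
  finally show "Lp_norm p (Pf f) \<le> nu (1 / p) f' * Lp_norm p rho1"
    by (simp add: \<nu>_def)
qed

theorem mainTheorem9:
  fixes f f' :: "real \<Rightarrow> complex"
  assumes "good_kernel f f'"
  shows "(AE x in lebesgue. x > 0 \<longrightarrow>
            summable (\<lambda>n. f (real (Suc n) * x)) \<and>
            set_integrable lebesgue {0<..} (\<lambda>t. complex_of_real (rho1 (x / t)) * f' t) \<and>
            Pf f x = T_op f' rho1 x \<and>
            T_op f' rho1 x = (LINT t:{0<..}|lebesgue. complex_of_real (rho1 (x / t)) * f' t) \<and>
            (LINT t:{0<..}|lebesgue. complex_of_real (rho1 (x / t)) * f' t)
              = (LINT t:{0<..}|lebesgue. complex_of_real (frac (t / x)) * f' t)) \<and>
         (\<forall>p::real. 1 < p \<longrightarrow>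
            set_integrable lebesgue {0<..} (\<lambda>x. norm (Pf f x) powr p) \<and>
            set_integrable lebesgue {0<..} (\<lambda>t. t powr (1 / p) * norm (f' t)) \<and>
            set_integrable lebesgue {0<..} (\<lambda>x. \<bar>rho1 x\<bar> powr p) \<and>
            Lp_norm p (Pf f) \<le> nu (1 / p) f' * Lp_norm p rho1) \<and>
         Pf f \<in> borel_measurable (restrict_space lebesgue {0<..}) \<and>
         (\<exists>C. AE x in lebesgue. x > 0 \<longrightarrow> norm (Pf f x) \<le> C)"
proof (intro conjI allI impI, goal_cases)
  case 1
  have "(\<lambda>t. complex_of_real (rho1 (x / t)) * f' t) = (\<lambda>t. frac (t / x) *\<^sub>R f' t)" for x
    by (simp add: rho1_div scaleR_conv_of_real)
  then show ?case
    using sums_summable[OF good_kernel_sums[OF assms]] good_kernel_frac_deriv_integrable[OF assms]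
          Pf_eq_integral_frac[OF assms]
    by (intro AE_I2) (simp add: T_op_def scaleR_conv_of_real)
next
  case (3 p)
  then show ?case
    by (intro good_kernel_powr_norm_deriv_integrable[OF assms]) auto
next
  case 7
  show ?case
    using norm_Pf_le_deriv_L1[OF assms] by blast
qed (simp_all add: Pf_Lp[OF assms] rho1_powr_integrable Pf_measurable[OF assms])

end
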